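(* Let $T_r$ be a resistive dyadic tree with resistances $(r_n^k)$ and let $s>0$ be such that $$\sum_{n\geq 1}\frac{\max_{0\le k\le 2^n-1} r_n^k}{2^{n(1-2s)}}<+\infty .$$ Then (this condition implies $\sum_{n\ge1}2^{-n}\max_k r_n^k<\infty$, so that for every $p\in H^1(T_r)$ the sequence $\tilde p_n$ converges in $L^2(\mathbb{Z}_2)$ to a limit $\gamma_0(p)$) the trace operator $\gamma_0$ maps $H^1(T_r)$ continuously into $H^s(\mathbb{Z}_2)$: $\gamma_0(p)\in H^s(\mathbb{Z}_2)$ for all $p\in H^1(T_r)$ and $\|\gamma_0(p)\|_{H^s(\mathbb{Z}_2)}\le C\|p\|_{H^1(T_r)}$ with $C$ independent of $p$.
   Context: The infinite dyadic tree $T$ has vertex set $V$ equal to the disjoint union over $n\ge 0$ of the sets $\mathbb{Z}/2^n\mathbb{Z}$; $x_n^k$ denotes $k\in\mathbb{Z}/2^n\mathbb{Z}$, and $x_0^0$ is the root. For $n<m$, $\varphi_n^m:\mathbb{Z}/2^m\mathbb{Z}\to\mathbb{Z}/2^n\mathbb{Z}$ is the canonical surjection. For $n\ge1$ the edge $e_n^k$ joins $x_n^k$ to $\varphi_{n-1}^n(x_n^k)$. A resistive dyadic tree $T_r$ is $T$ with positive resistances $r_n^k$ on $e_n^k$ ($n\ge1$, $0\le k\le2^n-1$). $|p|_{H^1}^2=\sum_{n\ge1}\sum_k |p(x_n^k)-p(\varphi_{n-1}^n(x_n^k))|^2/r_n^k$, $H^1(T_r)=\{p:V\to\mathbb{R}:|p|_{H^1}<\infty\}$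 with norm $\|p\|_{H^1(T_r)}^2=|p(x_0^0)|^2+|p|_{H^1}^2$. $\mathbb{Z}_2$: 2-adic integers, $|\cdot|_2$ the 2-adic absolute value, $\mu$ the Haar probability measure on $\mathbb{Z}_2$. For $n\ge0$, $\tilde p_n(x)=p(x_n^a)$ where $a\in\{0,\dots,2^n-1\}$, $x\in a+2^n\mathbb{Z}_2$. Sobolev spaces: $\Lambda=\mathbb{Q}_2/\mathbb{Z}_2$ (identified with $\mathbb{Z}[1/2]\cap[0,1)$); for $f\in L^2(\mathbb{Z}_2)$ and $\lambda\in\Lambda$, $\mathcal F(f)(\lambda)=\int_{\mathbb{Z}_2}e^{-2i\pi\lambda x}f(x)\,d\mu(x)$; $H^s(\mathbb{Z}_2)$ is the completion of the space of locally constant functions on $\mathbb{Z}_2$ for the norm $\|f\|_{H^s(\mathbb{Z}_2)}=\big(\sum_{\lambda\in\Lambda}(1+|\lambda|_2)^{2s}|\mathcal F(f)(\lambda)|^2\big)^{1/2}$. *)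

theory Defs
  imports "HOL-Probability.Probability"
begin

text \<open>Dyadic tree: vertex x_n^k is the pair (n,k) with k < 2^n; a function on the
vertices is p :: nat => nat => real (only values with k < 2^n matter).
The parent of x_(n+1)^k is x_n^(k mod 2^n).\<close>

definition max_res :: "(nat \<Rightarrow> nat \<Rightarrow> real) \<Rightarrow> nat \<Rightarrow> real" where
  "max_res r n = Max ((\<lambda>k. r n k) ` {..<2^n})"

definition H1_seminorm_terms :: "(nat \<Rightarrow> nat \<Rightarrow> real) \<Rightarrow> (nat \<Rightarrow> nat \<Rightarrow> real) \<Rightarrow> nat \<Rightarrow> real" where
  "H1_seminorm_terms r p n =
     (\<Sum>k<2^(Suc n). (p (Suc n) k - p n (k mod 2^n))^2 / r (Suc n) k)"

definition in_H1 :: "(nat \<Rightarrow> nat \<Rightarrow> real) \<Rightarrow> (nat \<Rightarrow> nat \<Rightarrow> real) \<Rightarrow> bool" where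
  "in_H1 r p \<longleftrightarrow> summable (H1_seminorm_terms r p)"

definition H1_norm :: "(nat \<Rightarrow> nat \<Rightarrow> real) \<Rightarrow> (nat \<Rightarrow> nat \<Rightarrow> real) \<Rightarrow> real" where
  "H1_norm r p = sqrt ((p 0 0)^2 + suminf (H1_seminorm_terms r p))"

text \<open>2-adic integers as bit sequences (x = sum of x_i 2^i); Haar probability measure
is the product of fair coin measures.\<close>

definition Z2_haar :: "(nat \<Rightarrow> bool) measure" where
  "Z2_haar = PiM UNIV (\<lambda>_. measure_pmf (bernoulli_pmf (1/2)))"

definition z2_trunc :: "nat \<Rightarrow> (nat \<Rightarrow> bool) \<Rightarrow> nat" where
  "z2_trunc n x = (\<Sum>i<n. if x i then 2^i else 0)"   \<comment> \<open>x mod 2^n\<close>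

definition ptilde :: "(nat \<Rightarrow> nat \<Rightarrow> real) \<Rightarrow> nat \<Rightarrow> (nat \<Rightarrow> bool) \<Rightarrow> real" where
  "ptilde p n x = p n (z2_trunc n x)"

definition L2_lim :: "(nat \<Rightarrow> nat \<Rightarrow> real) \<Rightarrow> ((nat \<Rightarrow> bool) \<Rightarrow> real) \<Rightarrow> bool" where
  "L2_lim p g \<longleftrightarrow> g \<in> borel_measurable Z2_haar \<and> integrable Z2_haar (\<lambda>x. (g x)^2) \<and>
     (\<lambda>n. \<integral>x. (ptilde p n x - g x)^2 \<partial>Z2_haar) \<longlonglongrightarrow> 0"

text \<open>Lambda = Q_2/Z_2 identified with Z[1/2] \<inter> [0,1).\<close>

definition Lambda2 :: "real set" where
  "Lambda2 = {real a / 2^m | a m. a < (2::nat)^m}"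

definition ord2 :: "real \<Rightarrow> nat" where
  "ord2 l = (LEAST m. l * 2^m \<in> \<int>)"

definition abs2 :: "real \<Rightarrow> real" where
  "abs2 l = (if l = 0 then 0 else 2 ^ ord2 l)"

text \<open>The character x \<mapsto> exp(-2 i pi l x), computed via x mod 2^(ord2 l).\<close>

definition char2 :: "real \<Rightarrow> (nat \<Rightarrow> bool) \<Rightarrow> complex" where
  "char2 l x = cis (- 2 * pi * l * real (z2_trunc (ord2 l) x))"

definition fourier2 :: "((nat \<Rightarrow> bool) \<Rightarrow> real) \<Rightarrow> real \<Rightarrow> complex" where
  "fourier2 f l = (\<integral>x. char2 l x * complex_of_real (f x) \<partial>Z2_haar)"

definition Hs_terms :: "real \<Rightarrow> ((nat \<Rightarrow> bool) \<Rightarrow> real) \<Rightarrow> real \<Rightarrow> real" where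
  "Hs_terms s f l = (1 + abs2 l) powr (2 * s) * (cmod (fourier2 f l))^2"

definition in_Hs :: "real \<Rightarrow> ((nat \<Rightarrow> bool) \<Rightarrow> real) \<Rightarrow> bool" where
  "in_Hs s f \<longleftrightarrow> Hs_terms s f summable_on Lambda2"

definition Hs_norm :: "real \<Rightarrow> ((nat \<Rightarrow> bool) \<Rightarrow> real) \<Rightarrow> real" where
  "Hs_norm s f = sqrt (infsum (Hs_terms s f) Lambda2)"

end

theory Submission
  imports Defs
begin

text \<open>By telescoping, \<open>ptilde p N = (\<Sum>n\<le>N. e n)\<close> with the level increments
  \<open>e n x = p n (x mod 2^n) - p (n - 1) (x mod 2^(n - 1))\<close>. Each \<open>e n\<close> is a function of
  \<open>x mod 2^n\<close>, so its Fourier coefficients vanish unless \<open>|\<lambda>|\<^sub>2 \<le> 2^n\<close>, and by the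
  discrete Parseval identity its squared \<open>H\<^sup>s\<close> norm is at most
  \<open>(1 + 2^n) powr (2 * s) * \<parallel>e n\<parallel>\<^sup>2 \<le> c n * \<beta> n\<close>, where \<open>\<beta> n\<close> is the energy of \<open>p\<close>
  on the edges of level \<open>n\<close> and \<open>c n = (1 + 2^n) powr (2 * s) * max_res r n / 2^n\<close> is summable
  by hypothesis. The weighted Cauchy--Schwarz inequality
  \<open>(\<Sum>n. a n)\<^sup>2 \<le> (\<Sum>n. c n) * (\<Sum>n. (a n)\<^sup>2 / c n)\<close>, applied pointwise on \<open>\<int>\<^sub>2\<close> and
  to each Fourier coefficient, gives both the \<open>L\<^sup>2\<close> limit of \<open>ptilde p N\<close> and the bound
  with \<open>C = sqrt (\<Sum>n. c n)\<close>.\<close>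

lemma z2_trunc_0 [simp]: "z2_trunc 0 x = 0"
  by (simp add: z2_trunc_def)

lemma z2_trunc_Suc: "z2_trunc (Suc m) x = z2_trunc m x + (if x m then 2^m else 0)"
  by (simp add: z2_trunc_def)

lemma z2_trunc_less: "z2_trunc m x < 2^m"
  by (induction m) (auto simp: z2_trunc_Suc)

lemma z2_trunc_mod: "a \<le> b \<Longrightarrow> z2_trunc b x mod 2^a = z2_trunc a x"
proof (induction b)
  case 0
  then show ?case by simp
next
  case (Suc b)
  show ?case
  proof (cases "a = Suc b")
    case True
    then show ?thesis by (metis mod_less z2_trunc_less)
  next
    case False
    then have "a \<le> b" using Suc by simp
    then have "(2::nat)^a dvd 2^b" by (simp add: le_imp_power_dvd)
    then have "z2_trunc (Suc b) x mod 2^a = z2_trunc b x mod 2^a"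
      by (auto simp: z2_trunc_Suc mod_add_right_eq[symmetric])
    then show ?thesis using Suc \<open>a \<le> b\<close> by simp
  qed
qed

lemma z2_trunc_eq_iff: "k < 2^m \<Longrightarrow> z2_trunc m x = k \<longleftrightarrow> (\<forall>i<m. x i = bit k i)"
proof (induction m arbitrary: k)
  case 0
  then show ?case by simp
next
  case (Suc m)
  have t: "z2_trunc m x < 2^m" by (rule z2_trunc_less)
  have "k div 2^m < 2" using Suc.prems by (simp add: less_mult_imp_div_less mult.commute)
  then have top_bit: "k div 2^m = 0 \<or> k div 2^m = 1" by linarith
  then have bit_m: "bit k m \<longleftrightarrow> k div 2^m = 1" by (auto simp: bit_iff_odd)
  have low_bits: "bit (k mod 2^m) i = bit k i" if "i < m" for i
    using that by (simp add: bit_take_bit_iff take_bit_eq_mod[symmetric])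
  have k_split: "k = k mod 2^m + (if k div 2^m = 1 then 2^m else 0)"
    using top_bit mod_mult_div_eq[of k "2^m"] by (metis add.right_neutral mult_0_right mult_1_right)
  have "z2_trunc (Suc m) x = k \<longleftrightarrow> z2_trunc m x = k mod 2^m \<and> (x m \<longleftrightarrow> k div 2^m = 1)"
  proof
    assume "z2_trunc (Suc m) x = k"
    then have "k = z2_trunc m x + (if x m then 2^m else 0)" by (simp add: z2_trunc_Suc)
    then show "z2_trunc m x = k mod 2^m \<and> (x m \<longleftrightarrow> k div 2^m = 1)" using t by auto
  next
    assume "z2_trunc m x = k mod 2^m \<and> (x m \<longleftrightarrow> k div 2^m = 1)"
    then show "z2_trunc (Suc m) x = k"
      using k_split by (simp add: z2_trunc_Suc)
  qed
  also have "\<dots> \<longleftrightarrow> (\<forall>i<Suc m. x i = bit k i)"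
    using Suc.IH[of "k mod 2^m"] low_bits bit_m by (auto simp: less_Suc_eq)
  finally show ?case .
qed

lemma space_Z2_haar [simp]: "space Z2_haar = UNIV"
  by (simp add: Z2_haar_def space_PiM)

lemma prob_space_Z2_haar: "prob_space Z2_haar"
  unfolding Z2_haar_def by (rule prob_space_PiM) (simp add: prob_space_measure_pmf)

lemma z2_cylinder_eq_prod_emb:
  "k < 2^m \<Longrightarrow> {x. z2_trunc m x = k} =
     prod_emb UNIV (\<lambda>_. measure_pmf (bernoulli_pmf (1/2))) {..<m} (PiE {..<m} (\<lambda>i. {bit k i}))"
  by (rule set_eqI) (simp add: prod_emb_iff z2_trunc_eq_iff restrict_PiE_iff Pi_iff Ball_def)

lemma emeasure_z2_cylinder:
  assumes "k < 2^m"
  shows "emeasure Z2_haar {x. z2_trunc m x = k} = ennreal (1/2^m)"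
proof -
  have "emeasure Z2_haar {x. z2_trunc m x = k} =
        (\<Prod>i<m. emeasure (measure_pmf (bernoulli_pmf (1/2))) {bit k i})"
    unfolding z2_cylinder_eq_prod_emb[OF assms] Z2_haar_def
    by (rule emeasure_PiM_emb) (auto simp: prob_space_measure_pmf)
  also have "\<dots> = ennreal (1/2) ^ m"
    by (simp add: emeasure_pmf_single)
  also have "\<dots> = ennreal (1/2^m)"
    by (subst ennreal_power) (simp_all add: power_one_over)
  finally show ?thesis .
qed

lemma measure_z2_cylinder: "k < 2^m \<Longrightarrow> measure Z2_haar {x. z2_trunc m x = k} = 1/2^m"
  using emeasure_z2_cylinder by (simp add: measure_def)

lemma sets_z2_cylinder: "{x. z2_trunc m x = k} \<in> sets Z2_haar"
proof (cases "k < 2^m")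
  case True
  show ?thesis
    unfolding z2_cylinder_eq_prod_emb[OF True] Z2_haar_def by (rule sets_PiM_I) auto
next
  case False
  then have "{x. z2_trunc m x = k} = {}" using z2_trunc_less[of m] leD by blast
  then show ?thesis by simp
qed

lemma measurable_z2_trunc [measurable]: "z2_trunc m \<in> measurable Z2_haar (count_space UNIV)"
proof -
  have "z2_trunc m -` {k} \<inter> space Z2_haar = {x. z2_trunc m x = k}" for k by auto
  then show ?thesis by (simp add: measurable_count_space_eq2_countable sets_z2_cylinder)
qed

lemma borel_measurable_cylinder [measurable]: "(\<lambda>x. f (z2_trunc n x)) \<in> borel_measurable Z2_haar"
  by (rule measurable_compose[OF measurable_z2_trunc]) simp

lemma integrable_z2_cylinder_indicator:
  "integrable Z2_haar (indicator {x. z2_trunc m x = k} :: _ \<Rightarrow> real)"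
proof -
  interpret prob_space Z2_haar by (rule prob_space_Z2_haar)
  show ?thesis
    by (rule integrable_real_indicator[OF sets_z2_cylinder]) (simp add: less_top[symmetric])
qed

lemma cylinder_eq_sum_indicator:
  fixes h :: "nat \<Rightarrow> 'b::real_vector"
  shows "h (z2_trunc m x) = (\<Sum>k<2^m. indicator {x. z2_trunc m x = k} x *\<^sub>R h k)"
proof -
  have "indicator {x. z2_trunc m x = k} x *\<^sub>R h k = (if z2_trunc m x = k then h k else 0)" for k
    by (simp add: indicator_def)
  then show ?thesis using z2_trunc_less[of m x] by simp
qed

lemma integrable_cylinder:
  fixes h :: "nat \<Rightarrow> 'b::{banach,second_countable_topology}"
  shows "integrable Z2_haar (\<lambda>x. h (z2_trunc m x))"
  by (subst cylinder_eq_sum_indicator)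
    (intro Bochner_Integration.integrable_sum integrable_scaleR_left integrable_z2_cylinder_indicator)

lemma integral_cylinder:
  fixes h :: "nat \<Rightarrow> 'b::{banach,second_countable_topology}"
  shows "(\<integral>x. h (z2_trunc m x) \<partial>Z2_haar) = (\<Sum>k<2^m. h k) /\<^sub>R 2^m"
proof -
  have "(\<integral>x. h (z2_trunc m x) \<partial>Z2_haar) =
        (\<Sum>k<2^m. \<integral>x. indicator {x. z2_trunc m x = k} x *\<^sub>R h k \<partial>Z2_haar)"
    by (subst cylinder_eq_sum_indicator)
      (intro Bochner_Integration.integral_sum integrable_scaleR_left integrable_z2_cylinder_indicator)
  also have "\<dots> = (\<Sum>k<2^m. (1/2^m) *\<^sub>R h k)"
    by (intro sum.cong refl)
      (simp add: integrable_z2_cylinder_indicator measure_z2_cylinder sets_z2_cylinder)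
  also have "\<dots> = (\<Sum>k<2^m. h k) /\<^sub>R 2^m"
    by (simp add: scaleR_sum_right divide_inverse_commute)
  finally show ?thesis .
qed

section \<open>Fourier coefficients of cylinder functions\<close>

lemma Lambda2_bounds:
  assumes "l \<in> Lambda2"
  shows "0 \<le> l \<and> l < 1"
proof -
  obtain a m where l: "l = real a / 2^m" and a: "a < (2::nat)^m"
    using assms by (auto simp: Lambda2_def)
  have "real a < 2^m" using a by (metis of_nat_less_iff of_nat_numeral of_nat_power)
  then show ?thesis using l by (simp add: divide_less_eq)
qed

lemma Ints_mult_power2_iff: "l \<in> Lambda2 \<Longrightarrow> l * 2^m \<in> \<int> \<longleftrightarrow> ord2 l \<le> m"
proof
  assume "l * 2^m \<in> \<int>"
  then show "ord2 l \<le> m" unfolding ord2_def by (rule Least_le)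
next
  assume l: "l \<in> Lambda2" and m: "ord2 l \<le> m"
  from l obtain a k where "l = real a / 2^k" by (auto simp: Lambda2_def)
  then have "l * 2^k \<in> \<int>" by simp
  then have "l * 2 ^ ord2 l \<in> \<int>" unfolding ord2_def by (rule LeastI)
  then have "l * 2 ^ ord2 l * 2 ^ (m - ord2 l) \<in> \<int>"
    by (rule Ints_mult) (simp add: Ints_power)
  moreover have "(2::real) ^ ord2 l * 2 ^ (m - ord2 l) = 2 ^ m"
    using m by (simp flip: power_add)
  ultimately show "l * 2^m \<in> \<int>" by (simp add: mult.assoc)
qed

lemma cis_mod_power2:
  assumes "l * 2^m \<in> \<int>"
  shows "cis (-2*pi*l*real (k mod 2^m)) = cis (-2*pi*l*real k)"
proof -
  have "real k = real (k mod 2^m) + real (2^m) * real (k div 2^m)"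
    by (subst of_nat_mult[symmetric], subst of_nat_add[symmetric]) simp
  then have "-2*pi*l*real k = -2*pi*l*real (k mod 2^m) + 2*pi*(- (l * 2^m) * real (k div 2^m))"
    by (simp add: algebra_simps)
  moreover have "- (l * 2^m) * real (k div 2^m) \<in> \<int>"
    using Ints_minus[OF assms] by (rule Ints_mult) simp
  moreover have "cis (x + 2*pi*n) = cis x" if "n \<in> \<int>" for x n
    using that by (simp add: cis_mult[symmetric])
  ultimately show ?thesis by metis
qed

lemma fourier2_cylinder:
  fixes h :: "nat \<Rightarrow> real"
  assumes l: "l \<in> Lambda2" and "M \<le> L" and "ord2 l \<le> L"
  shows "fourier2 (\<lambda>x. h (z2_trunc M x)) l =
    (\<Sum>k<2^L. cis (-2*pi*l*real k) * complex_of_real (h (k mod 2^M))) / 2^L"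
proof -
  define G where "G k = cis (-2*pi*l*real k) * complex_of_real (h (k mod 2^M))" for k
  have "char2 l x * complex_of_real (h (z2_trunc M x)) = G (z2_trunc L x)" for x
    using assms cis_mod_power2[of l "ord2 l" "z2_trunc L x"]
    by (simp add: char2_def G_def z2_trunc_mod Ints_mult_power2_iff)
  then have "fourier2 (\<lambda>x. h (z2_trunc M x)) l = (\<integral>x. G (z2_trunc L x) \<partial>Z2_haar)"
    by (simp add: fourier2_def)
  also have "\<dots> = (\<Sum>k<2^L. G k) / 2^L"
    by (simp add: integral_cylinder scaleR_conv_of_real divide_inverse_commute)
  finally show ?thesis unfolding G_def .
qed

lemma sum_cis_eq_0:
  assumes "real N * t \<in> \<int>" and "t \<notin> \<int>"
  shows "(\<Sum>a<N. cis (2 * pi * real a * t)) = 0"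
proof -
  define z where "z = cis (2 * pi * t)"
  have pow: "z ^ a = cis (2 * pi * real a * t)" for a
    unfolding z_def Complex.DeMoivre by (simp add: mult_ac)
  have "z ^ N = 1"
    using cis_multiple_2pi[OF assms(1)] unfolding pow by (simp add: mult_ac)
  moreover have "z \<noteq> 1"
  proof
    assume "z = 1"
    then have "exp (\<i> * complex_of_real (2 * pi * t)) = 1" by (simp add: z_def cis_conv_exp)
    then obtain n :: int where "2 * pi * t = of_int (2 * n) * pi" by (auto simp: exp_eq_1)
    then have "t = of_int n" by simp
    with assms(2) show False by simp
  qed
  ultimately show ?thesis by (simp add: pow[symmetric] sum_gp_strict)
qed

text \<open>The character sum over each block of \<open>2^M\<close> consecutive residues is a full sum of
  nontrivial roots of unity.\<close>

lemma fourier2_cylinder_eq_0: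
  fixes h :: "nat \<Rightarrow> real"
  assumes l: "l \<in> Lambda2" and M: "M < ord2 l"
  shows "fourier2 (\<lambda>x. h (z2_trunc M x)) l = 0"
proof -
  define L where "L = ord2 l"
  define N :: nat where "N = 2^(L - M)"
  define f where "f k = cis (-2*pi*l*real k) * complex_of_real (h (k mod 2^M))" for k
  define c where "c i = cis (-2*pi*l*real i) * complex_of_real (h i)" for i
  have LN: "(2::nat)^L = N * 2^M"
    using M unfolding N_def L_def by (simp flip: power_add)
  have block: "f (i + j*2^M) = c i * cis (2*pi*real j*(-(l*2^M)))" if "i < 2^M" for i j
  proof -
    have "cis (-2*pi*l*real (i + j*2^M)) = cis (-2*pi*l*real i) * cis (2*pi*real j*(-(l*2^M)))"
      by (simp add: cis_mult algebra_simps)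
    then show ?thesis using that by (simp add: f_def c_def)
  qed
  have "(\<Sum>k<2^L. f k) = (\<Sum>j<N. \<Sum>k\<in>{j*2^M..<j*2^M+2^M}. f k)"
    unfolding LN by (rule sum.nat_group[symmetric])
  also have "\<dots> = (\<Sum>j<N. \<Sum>i<2^M. f (i + j*2^M))"
  proof (rule sum.cong[OF refl])
    fix j :: nat
    have "{j*2^M..<j*2^M+2^M} = {0+j*2^M..<2^M+j*2^M}" by (simp add: add.commute)
    then show "(\<Sum>k\<in>{j*2^M..<j*2^M+2^M}. f k) = (\<Sum>i<2^M. f (i + j*2^M))"
      by (simp only: sum.shift_bounds_nat_ivl atLeast0LessThan)
  qed
  also have "\<dots> = (\<Sum>i<2^M. c i) * (\<Sum>j<N. cis (2*pi*real j*(-(l*2^M))))"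
    by (simp add: block sum_product sum.swap[of _ "{..<N}"])
  also have "(\<Sum>j<N. cis (2*pi*real j*(-(l*2^M)))) = 0"
  proof (rule sum_cis_eq_0)
    have "real N * 2^M = 2^L" using LN by (metis of_nat_mult of_nat_numeral of_nat_power)
    then have "real N * (-(l*2^M)) = -(l*2^L)" by (simp add: algebra_simps)
    moreover have "l*2^L \<in> \<int>" using l by (simp add: Ints_mult_power2_iff L_def)
    ultimately show "real N * (-(l*2^M)) \<in> \<int>" by (metis Ints_minus)
    show "-(l*2^M) \<notin> \<int>"
      using l M by (metis Ints_minus minus_minus Ints_mult_power2_iff not_le)
  qed
  finally have "(\<Sum>k<2^L. f k) = 0" by simp
  then show ?thesis
    using fourier2_cylinder[OF l _ order_refl, of M h] M unfolding L_def f_def by simp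
qed

lemma dft_orthogonality:
  assumes "k < (2::nat)^n" "k' < (2::nat)^n"
  shows "(\<Sum>a<2^n. cis (2*pi*real a*((real k' - real k)/2^n))) = (if k = k' then 2^n else 0)"
proof (cases "k = k'")
  case False
  have "real k < 2^n" "real k' < 2^n"
    using assms by (metis of_nat_less_iff of_nat_numeral of_nat_power)+
  then have "\<bar>real k' - real k\<bar> < 2^n" by (simp only: abs_less_iff) linarith
  then have "\<bar>(real k' - real k)/2^n\<bar> < 1" by (simp add: abs_divide)
  then have "(real k' - real k)/2^n \<notin> \<int>"
    using False Ints_nonzero_abs_less1 by fastforce
  then have "(\<Sum>a<2^n. cis (2*pi*real a*((real k' - real k)/2^n))) = 0"
    by (intro sum_cis_eq_0) auto
  then show ?thesis using False by simp
qed simp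

lemma dft_parseval:
  fixes h :: "nat \<Rightarrow> real"
  shows "(\<Sum>a<2^n. (cmod (\<Sum>k<2^n. cis (-2*pi*(real a/2^n)*real k) * complex_of_real (h k)))^2)
       = 2^n * (\<Sum>k<2^n. (h k)^2)"
proof -
  define N :: nat where "N = 2^n"
  define S where "S a = (\<Sum>k<N. cis (-2*pi*(real a/2^n)*real k) * complex_of_real (h k))" for a
  define E where "E a k k' = cis (2*pi*real a*((real k' - real k)/2^n))" for a k k'
  have cis_prod: "cis (-2*pi*(real a/2^n)*real k) * cis (2*pi*(real a/2^n)*real k') = E a k k'"
    for a k k'
    by (simp add: E_def cis_mult diff_divide_distrib algebra_simps)
  have S_sq: "S a * cnj (S a) = (\<Sum>k<N. \<Sum>k'<N. complex_of_real (h k * h k') * E a k k')" for a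
    by (simp add: S_def cis_cnj sum_product flip: cis_prod) (simp add: mult_ac)
  have "complex_of_real (\<Sum>a<N. (cmod (S a))^2) = (\<Sum>a<N. S a * cnj (S a))"
    by (simp only: of_real_sum complex_norm_square)
  also have "\<dots> = (\<Sum>a<N. \<Sum>k<N. \<Sum>k'<N. complex_of_real (h k * h k') * E a k k')"
    by (simp only: S_sq)
  also have "\<dots> = (\<Sum>k<N. \<Sum>k'<N. \<Sum>a<N. complex_of_real (h k * h k') * E a k k')"
    by (subst sum.swap) (subst (2) sum.swap, rule refl)
  also have "\<dots> = (\<Sum>k<N. \<Sum>k'<N. complex_of_real (h k * h k') * (\<Sum>a<N. E a k k'))"
    by (simp only: sum_distrib_left)
  also have "\<dots> = (\<Sum>k<N. \<Sum>k'<N. complex_of_real (h k * h k') * (if k = k' then 2^n else 0))"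
    using dft_orthogonality[of _ n] unfolding E_def N_def
    by (intro sum.cong refl) (simp only: lessThan_iff)
  also have "\<dots> = complex_of_real (2^n * (\<Sum>k<N. (h k)^2))"
    by (simp add: if_distrib sum_distrib_left power2_eq_square mult.commute cong: if_cong)
  finally show ?thesis unfolding S_def N_def of_real_eq_iff .
qed

lemma Lambda2_mem_dyadic_grid:
  assumes "l \<in> Lambda2" "ord2 l \<le> n"
  shows "l \<in> (\<lambda>a. real a / 2^n) ` {..<2^n}"
proof -
  have "l * 2^n \<in> \<int>" using assms by (simp add: Ints_mult_power2_iff)
  then obtain z where z: "l * 2^n = of_int z" by (auto elim: Ints_cases)
  have "0 \<le> l" "l < 1" using Lambda2_bounds[OF assms(1)] by auto
  then have "0 \<le> real_of_int z" "real_of_int z < 2^n"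
    unfolding z[symmetric] by auto
  then have "0 \<le> z" "z < 2^n" by (simp, metis of_int_less_iff of_int_numeral of_int_power)
  then have "nat z < 2^n" "l = real (nat z) / 2^n"
    using z by (simp_all add: nat_less_iff field_simps)
  then show ?thesis by blast
qed

text \<open>The Fourier coefficients of a function of the first \<open>n\<close> digits live on the \<open>2^n\<close>
  frequencies \<open>a/2^n\<close>, where \<open>|\<lambda>|\<^sub>2 \<le> 2^n\<close>, and there they are the discrete Fourier
  transform of its values.\<close>

lemma Hs_terms_cylinder_le:
  fixes h :: "nat \<Rightarrow> real"
  assumes s: "0 \<le> s" and F: "finite F" "F \<subseteq> Lambda2"
  shows "(\<Sum>l\<in>F. Hs_terms s (\<lambda>x. h (z2_trunc n x)) l)
     \<le> (1 + 2^n) powr (2 * s) * ((\<Sum>k<2^n. (h k)^2) / 2^n)"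
proof -
  define W :: real where "W = (1 + 2^n) powr (2 * s)"
  define T where "T l = (\<Sum>k<(2::nat)^n. cis (-2*pi*l*real k) * complex_of_real (h k))" for l
  define F1 where "F1 = {l\<in>F. ord2 l \<le> n}"
  have fourier_F1: "fourier2 (\<lambda>x. h (z2_trunc n x)) l = T l / 2^n" if "l \<in> F1" for l
    using that F fourier2_cylinder[of l n n h] unfolding F1_def T_def by auto
  have "Hs_terms s (\<lambda>x. h (z2_trunc n x)) l = 0" if "l \<in> F - F1" for l
    using that F fourier2_cylinder_eq_0[of l n h] by (auto simp: F1_def Hs_terms_def not_le)
  then have "(\<Sum>l\<in>F. Hs_terms s (\<lambda>x. h (z2_trunc n x)) l) =
             (\<Sum>l\<in>F1. Hs_terms s (\<lambda>x. h (z2_trunc n x)) l)"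
    using F by (intro sum.mono_neutral_right) (auto simp: F1_def)
  also have "\<dots> \<le> (\<Sum>l\<in>F1. W * ((cmod (T l))^2 / (2^n)^2))"
  proof (rule sum_mono)
    fix l assume l: "l \<in> F1"
    have "abs2 l \<le> 2^n" using l unfolding F1_def abs2_def by auto
    then have weight_le: "(1 + abs2 l) powr (2 * s) \<le> W"
      unfolding W_def using s by (intro powr_mono2) (auto simp: abs2_def)
    have fourier_sq: "(cmod (fourier2 (\<lambda>x. h (z2_trunc n x)) l))^2 = (cmod (T l))^2 / (2^n)^2"
      by (simp add: fourier_F1[OF l] norm_divide norm_power power_divide
          flip: power_mult_distrib power2_eq_square)
    show "Hs_terms s (\<lambda>x. h (z2_trunc n x)) l \<le> W * ((cmod (T l))^2 / (2^n)^2)"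
      unfolding Hs_terms_def fourier_sq using weight_le by (rule mult_right_mono) simp
  qed
  also have "\<dots> \<le> (\<Sum>l\<in>(\<lambda>a. real a / 2^n) ` {..<2^n}. W * ((cmod (T l))^2 / (2^n)^2))"
    using Lambda2_mem_dyadic_grid F unfolding F1_def W_def by (intro sum_mono2) auto
  also have "\<dots> = W / (2^n)^2 * (\<Sum>a<2^n. (cmod (T (real a / 2^n)))^2)"
    by (subst sum.reindex) (auto simp: inj_on_def sum_distrib_left)
  also have "\<dots> = W * ((\<Sum>k<2^n. (h k)^2) / 2^n)"
    unfolding T_def dft_parseval by (simp add: power2_eq_square field_simps)
  finally show ?thesis unfolding W_def .
qed

lemma borel_measurable_char2 [measurable]: "char2 l \<in> borel_measurable Z2_haar"
  unfolding char2_def[abs_def] by measurable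

lemma integrable_char2_mult:
  fixes f :: "(nat \<Rightarrow> bool) \<Rightarrow> real"
  assumes f: "integrable Z2_haar f"
  shows "integrable Z2_haar (\<lambda>x. char2 l x * complex_of_real (f x))"
proof (rule Bochner_Integration.integrable_bound[OF f])
  show "(\<lambda>x. char2 l x * complex_of_real (f x)) \<in> borel_measurable Z2_haar"
    using borel_measurable_integrable[OF f] by measurable
qed (simp add: norm_mult char2_def)

lemma fourier2_sum:
  assumes "\<And>n. n \<in> A \<Longrightarrow> integrable Z2_haar (f n)"
  shows "fourier2 (\<lambda>x. \<Sum>n\<in>A. f n x) l = (\<Sum>n\<in>A. fourier2 (f n) l)"
  unfolding fourier2_def of_real_sum sum_distrib_left
  by (intro Bochner_Integration.integral_sum integrable_char2_mult assms)

lemma norm_fourier2_diff_le: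
  fixes f g :: "(nat \<Rightarrow> bool) \<Rightarrow> real"
  assumes f: "integrable Z2_haar f" and g: "integrable Z2_haar g"
  shows "norm (fourier2 f l - fourier2 g l) \<le> (\<integral>x. \<bar>f x - g x\<bar> \<partial>Z2_haar)"
proof -
  have "fourier2 f l - fourier2 g l = (\<integral>x. char2 l x * complex_of_real (f x - g x) \<partial>Z2_haar)"
    unfolding fourier2_def of_real_diff right_diff_distrib
    by (intro Bochner_Integration.integral_diff[symmetric] integrable_char2_mult f g)
  also have "norm \<dots> \<le> (\<integral>x. norm (char2 l x * complex_of_real (f x - g x)) \<partial>Z2_haar)"
    by (rule integral_norm_bound)
  also have "\<dots> = (\<integral>x. \<bar>f x - g x\<bar> \<partial>Z2_haar)"
    by (simp add: norm_mult char2_def flip: of_real_diff)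
  finally show ?thesis .
qed

lemma (in prob_space) integral_abs_le_sqrt_integral_square:
  fixes h :: "'a \<Rightarrow> real"
  assumes "integrable M h" and "integrable M (\<lambda>x. (h x)^2)"
  shows "(\<integral>x. \<bar>h x\<bar> \<partial>M) \<le> sqrt (\<integral>x. (h x)^2 \<partial>M)"
proof -
  have "0 \<le> variance (\<lambda>x. \<bar>h x\<bar>)" by (rule variance_positive)
  also have "\<dots> = (\<integral>x. \<bar>h x\<bar>^2 \<partial>M) - (\<integral>x. \<bar>h x\<bar> \<partial>M)^2"
    using assms by (intro variance_eq) simp_all
  finally show ?thesis by (simp add: real_le_rsqrt)
qed

section \<open>Weighted Cauchy--Schwarz and series of \<open>L\<^sup>2\<close> functions\<close>

lemma sum_squared_le_weighted:
  fixes a c :: "'i \<Rightarrow> real"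
  assumes "\<And>n. n \<in> A \<Longrightarrow> 0 < c n"
  shows "(\<Sum>n\<in>A. a n)^2 \<le> (\<Sum>n\<in>A. c n) * (\<Sum>n\<in>A. (a n)^2 / c n)"
proof -
  have "(\<Sum>n\<in>A. a n) = (\<Sum>n\<in>A. sqrt (c n) * (a n / sqrt (c n)))"
    using assms by (intro sum.cong) (simp_all add: less_imp_neq[symmetric])
  then have "(\<Sum>n\<in>A. a n)^2 = (\<Sum>n\<in>A. sqrt (c n) * (a n / sqrt (c n)))^2"
    by simp
  also have "\<dots> \<le> (\<Sum>n\<in>A. (sqrt (c n))^2) * (\<Sum>n\<in>A. (a n / sqrt (c n))^2)"
    by (rule Cauchy_Schwarz_ineq_sum)
  also have "\<dots> = (\<Sum>n\<in>A. c n) * (\<Sum>n\<in>A. (a n)^2 / c n)"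
    using assms by (intro arg_cong2[where f=times] sum.cong) (simp_all add: power_divide less_imp_le)
  finally show ?thesis .
qed

lemma norm_sum_squared_le_weighted:
  fixes f :: "'i \<Rightarrow> 'b::real_normed_vector" and c :: "'i \<Rightarrow> real"
  assumes "\<And>n. n \<in> A \<Longrightarrow> 0 < c n"
  shows "(norm (\<Sum>n\<in>A. f n))^2 \<le> (\<Sum>n\<in>A. c n) * (\<Sum>n\<in>A. (norm (f n))^2 / c n)"
proof -
  have "(norm (\<Sum>n\<in>A. f n))^2 \<le> (\<Sum>n\<in>A. norm (f n))^2"
    by (intro power_mono norm_sum) simp
  also have "\<dots> \<le> (\<Sum>n\<in>A. c n) * (\<Sum>n\<in>A. (norm (f n))^2 / c n)"
    using assms by (rule sum_squared_le_weighted)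
  finally show ?thesis .
qed

lemma suminf_tail_tendsto_0:
  fixes f :: "nat \<Rightarrow> real"
  assumes "summable f"
  shows "(\<lambda>N. \<Sum>i. f (i + N)) \<longlonglongrightarrow> 0"
proof -
  have "(\<lambda>N. suminf f - (\<Sum>i<N. f i)) \<longlonglongrightarrow> suminf f - suminf f"
    by (intro tendsto_diff tendsto_const summable_LIMSEQ assms)
  then show ?thesis by (simp add: suminf_minus_initial_segment[OF assms])
qed

lemma summable_tail_squared_le_weighted:
  fixes a c :: "nat \<Rightarrow> real"
  assumes c_pos: "\<And>n. 0 < c n" and c: "summable c" and ac: "summable (\<lambda>n. (a n)^2 / c n)"
  shows "summable a"
    and "(\<Sum>i. a (i + N))^2 \<le> (\<Sum>i. c (i + N)) * (\<Sum>n. (a n)^2 / c n)"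
proof -
  have "\<bar>a n\<bar> \<le> c n + (a n)^2 / c n" for n
  proof -
    have "c n + (a n)^2 / c n - \<bar>a n\<bar> = ((\<bar>a n\<bar> - c n)^2 + \<bar>a n\<bar> * c n) / c n"
      using c_pos[of n] by (simp add: field_simps power2_eq_square)
    also have "\<dots> \<ge> 0" using c_pos[of n] by simp
    finally show ?thesis by simp
  qed
  then show a: "summable a"
    by (intro summable_comparison_test'[OF summable_add[OF c ac]]) simp
  have ac_nonneg: "0 \<le> (a n)^2 / c n" for n using c_pos[of n] by simp
  have partial: "(\<Sum>i<M. a (i + N))^2 \<le> (\<Sum>i. c (i + N)) * (\<Sum>n. (a n)^2 / c n)" for M
  proof -
    have "(\<Sum>i<M. a (i + N))^2 \<le> (\<Sum>i<M. c (i + N)) * (\<Sum>i<M. (a (i + N))^2 / c (i + N))"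
      using c_pos by (rule sum_squared_le_weighted)
    also have "\<dots> \<le> (\<Sum>i. c (i + N)) * (\<Sum>n. (a n)^2 / c n)"
    proof (rule mult_mono)
      show "(\<Sum>i<M. c (i + N)) \<le> (\<Sum>i. c (i + N))"
        using c_pos by (intro sum_le_suminf summable_ignore_initial_segment c) (auto intro: less_imp_le)
      have "(\<Sum>i<M. (a (i + N))^2 / c (i + N)) \<le> (\<Sum>i. (a (i + N))^2 / c (i + N))"
        using ac_nonneg by (intro sum_le_suminf summable_ignore_initial_segment ac) auto
      also have "\<dots> \<le> (\<Sum>n. (a n)^2 / c n)"
        using suminf_split_initial_segment[OF ac, of N] ac_nonneg by (simp add: sum_nonneg)
      finally show "(\<Sum>i<M. (a (i + N))^2 / c (i + N)) \<le> (\<Sum>n. (a n)^2 / c n)" .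
    qed (use c_pos ac_nonneg in \<open>auto intro: suminf_nonneg sum_nonneg summable_ignore_initial_segment c less_imp_le\<close>)
    finally show ?thesis .
  qed
  have "(\<lambda>M. (\<Sum>i<M. a (i + N))^2) \<longlonglongrightarrow> (\<Sum>i. a (i + N))^2"
    by (intro tendsto_power summable_LIMSEQ summable_ignore_initial_segment a)
  then show "(\<Sum>i. a (i + N))^2 \<le> (\<Sum>i. c (i + N)) * (\<Sum>n. (a n)^2 / c n)"
    by (rule LIMSEQ_le_const2) (use partial in auto)
qed

lemma partial_sum_minus_lim_squared_le:
  fixes a c :: "nat \<Rightarrow> real"
  assumes "\<And>n. 0 < c n" and "summable c" and "summable (\<lambda>n. (a n)^2 / c n)"
  shows "((\<Sum>n<N. a n) - lim (\<lambda>N. \<Sum>n<N. a n))^2 \<le> (\<Sum>i. c (i + N)) * (\<Sum>n. (a n)^2 / c n)"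
proof -
  note tail = summable_tail_squared_le_weighted[OF assms]
  have "lim (\<lambda>N. \<Sum>n<N. a n) = (\<Sum>n. a n)"
    using summable_LIMSEQ[OF tail(1)] by (rule limI)
  then have "(\<Sum>n<N. a n) - lim (\<lambda>N. \<Sum>n<N. a n) = - (\<Sum>i. a (i + N))"
    using suminf_split_initial_segment[OF tail(1), of N] by simp
  then show ?thesis using tail(2)[of N] by simp
qed

lemma nn_integral_weighted_squares_le:
  fixes e :: "nat \<Rightarrow> 'a \<Rightarrow> real" and b c :: "nat \<Rightarrow> real"
  assumes [measurable]: "\<And>n. e n \<in> borel_measurable M"
    and e_sq: "\<And>n. integrable M (\<lambda>x. (e n x)^2)"
    and c_pos: "\<And>n. 0 < c n"
    and e_le: "\<And>n. (\<integral>x. (e n x)^2 \<partial>M) \<le> c n * b n" and b: "summable b"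
  shows "(\<integral>\<^sup>+x. (\<Sum>n. ennreal ((e n x)^2 / c n)) \<partial>M) \<le> ennreal (suminf b)"
proof -
  have b_nonneg: "0 \<le> b n" for n
  proof -
    have "0 \<le> (\<integral>x. (e n x)^2 \<partial>M)" by simp
    then have "0 \<le> c n * b n" using e_le[of n] by linarith
    then show ?thesis using c_pos[of n] by (simp add: zero_le_mult_iff)
  qed
  have "(\<integral>\<^sup>+x. (\<Sum>n. ennreal ((e n x)^2 / c n)) \<partial>M) = (\<Sum>n. \<integral>\<^sup>+x. ennreal ((e n x)^2 / c n) \<partial>M)"
    by (rule nn_integral_suminf) measurable
  also have "\<dots> = (\<Sum>n. ennreal ((\<integral>x. (e n x)^2 \<partial>M) / c n))"
    by (subst nn_integral_eq_integral) (auto intro!: AE_I2 e_sq simp: less_imp_le[OF c_pos])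
  also have "\<dots> \<le> (\<Sum>n. ennreal (b n))"
    using e_le c_pos by (intro suminf_le summableI ennreal_leI) (simp add: pos_divide_le_eq mult.commute)
  also have "\<dots> = ennreal (suminf b)"
    by (rule suminf_ennreal2[OF b_nonneg b])
  finally show ?thesis .
qed

lemma L2_convergent_weighted_series:
  fixes e :: "nat \<Rightarrow> 'a \<Rightarrow> real" and b c :: "nat \<Rightarrow> real"
  assumes e_meas [measurable]: "\<And>n. e n \<in> borel_measurable M"
    and e_sq: "\<And>n. integrable M (\<lambda>x. (e n x)^2)"
    and c_pos: "\<And>n. 0 < c n" and c: "summable c"
    and e_le: "\<And>n. (\<integral>x. (e n x)^2 \<partial>M) \<le> c n * b n" and b: "summable b"
  obtains g where "g \<in> borel_measurable M"
    and "\<And>N. (\<integral>\<^sup>+x. ennreal (((\<Sum>n<N. e n x) - g x)^2) \<partial>M) \<le> ennreal ((\<Sum>i. c (i + N)) * suminf b)"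
proof -
  define Q where "Q x = (\<Sum>n. ennreal ((e n x)^2 / c n))" for x
  have Q_integral: "(\<integral>\<^sup>+x. Q x \<partial>M) \<le> ennreal (suminf b)"
    unfolding Q_def using e_meas e_sq c_pos e_le b by (rule nn_integral_weighted_squares_le)
  define g where "g x = lim (\<lambda>N. \<Sum>n<N. e n x)" for x
  define T where "T N = (\<Sum>i. c (i + N))" for N
  have T_pos: "0 < T N" for N
    unfolding T_def by (intro suminf_pos summable_ignore_initial_segment c c_pos)
  have pointwise: "ennreal (((\<Sum>n<N. e n x) - g x)^2) \<le> ennreal (T N) * Q x" for N x
  proof (cases "Q x = \<top>")
    case True
    then show ?thesis using T_pos[of N] by (simp add: ennreal_mult_top)
  next
    case False
    have nonneg: "0 \<le> (e n x)^2 / c n" for n using c_pos[of n] by simp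
    then have summable_x: "summable (\<lambda>n. (e n x)^2 / c n)"
      using False unfolding Q_def by (rule summable_suminf_not_top)
    have "((\<Sum>n<N. e n x) - g x)^2 \<le> T N * (\<Sum>n. (e n x)^2 / c n)"
      unfolding g_def T_def using c_pos c summable_x by (rule partial_sum_minus_lim_squared_le)
    moreover have "Q x = ennreal (\<Sum>n. (e n x)^2 / c n)"
      unfolding Q_def using nonneg summable_x by (rule suminf_ennreal2)
    ultimately show ?thesis
      using T_pos[of N] by (simp add: ennreal_leI ennreal_mult[symmetric] suminf_nonneg summable_x nonneg)
  qed
  show ?thesis
  proof (rule that)
    show "g \<in> borel_measurable M" unfolding g_def by measurable
    fix N
    have "(\<integral>\<^sup>+x. ennreal (((\<Sum>n<N. e n x) - g x)^2) \<partial>M) \<le> (\<integral>\<^sup>+x. ennreal (T N) * Q x \<partial>M)"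
      by (intro nn_integral_mono pointwise)
    also have "\<dots> = ennreal (T N) * (\<integral>\<^sup>+x. Q x \<partial>M)"
      unfolding Q_def by (rule nn_integral_cmult) measurable
    also have "\<dots> \<le> ennreal (T N) * ennreal (suminf b)"
      using Q_integral by (rule mult_left_mono) simp
    also have "\<dots> = ennreal (T N * suminf b)"
      using T_pos[of N] by (simp add: ennreal_mult')
    finally show "(\<integral>\<^sup>+x. ennreal (((\<Sum>n<N. e n x) - g x)^2) \<partial>M) \<le> ennreal ((\<Sum>i. c (i + N)) * suminf b)"
      unfolding T_def .
  qed
qed

section \<open>Level increments on the dyadic tree\<close>

definition tree_increment :: "(nat \<Rightarrow> nat \<Rightarrow> real) \<Rightarrow> nat \<Rightarrow> nat \<Rightarrow> real" where
  "tree_increment p n k = p n k - (if n = 0 then 0 else p (n - 1) (k mod 2^(n - 1)))"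

definition ptilde_increment :: "(nat \<Rightarrow> nat \<Rightarrow> real) \<Rightarrow> nat \<Rightarrow> (nat \<Rightarrow> bool) \<Rightarrow> real" where
  "ptilde_increment p n x = tree_increment p n (z2_trunc n x)"

lemma borel_measurable_ptilde [measurable]: "ptilde p n \<in> borel_measurable Z2_haar"
  unfolding ptilde_def by measurable

lemma borel_measurable_ptilde_increment [measurable]: "ptilde_increment p n \<in> borel_measurable Z2_haar"
  unfolding ptilde_increment_def by measurable

lemma integrable_ptilde_increment: "integrable Z2_haar (ptilde_increment p n)"
  unfolding ptilde_increment_def[abs_def] by (rule integrable_cylinder)

lemma ptilde_eq_sum_increments: "ptilde p N x = (\<Sum>n<Suc N. ptilde_increment p n x)"
proof (induction N)
  case 0
  then show ?case by (simp add: ptilde_def ptilde_increment_def tree_increment_def)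
next
  case (Suc N)
  have "z2_trunc (Suc N) x mod 2^N = z2_trunc N x" by (rule z2_trunc_mod) simp
  then have "ptilde_increment p (Suc N) x = ptilde p (Suc N) x - ptilde p N x"
    by (simp add: ptilde_increment_def tree_increment_def ptilde_def)
  then show ?case using Suc.IH by simp
qed

lemma integral_ptilde_increment_square:
  "(\<integral>x. (ptilde_increment p n x)^2 \<partial>Z2_haar) = (\<Sum>k<2^n. (tree_increment p n k)^2) / 2^n"
  using integral_cylinder[of "\<lambda>k. (tree_increment p n k)^2" n]
  by (simp add: ptilde_increment_def divide_inverse_commute)

definition level_energy :: "(nat \<Rightarrow> nat \<Rightarrow> real) \<Rightarrow> (nat \<Rightarrow> nat \<Rightarrow> real) \<Rightarrow> nat \<Rightarrow> real" where
  "level_energy r p n = (if n = 0 then (p 0 0)^2 else H1_seminorm_terms r p (n - 1))"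

lemma level_energy_Suc [simp]: "level_energy r p (Suc m) = H1_seminorm_terms r p m"
  by (simp add: level_energy_def)

lemma level_energy_nonneg:
  assumes "\<forall>n k. 1 \<le> n \<and> k < 2^n \<longrightarrow> 0 < r n k"
  shows "0 \<le> level_energy r p n"
  using assms by (auto simp: level_energy_def H1_seminorm_terms_def intro!: sum_nonneg divide_nonneg_pos)

lemma summable_level_energy: "in_H1 r p \<Longrightarrow> summable (level_energy r p)"
  unfolding in_H1_def by (subst summable_Suc_iff[symmetric]) (simp add: level_energy_def)

lemma H1_norm_eq_sqrt_suminf_level_energy:
  "in_H1 r p \<Longrightarrow> H1_norm r p = sqrt (suminf (level_energy r p))"
  using suminf_split_head[OF summable_level_energy, of r p]
  by (simp add: H1_norm_def level_energy_def)

lemma max_res_ge: "k < 2^n \<Longrightarrow> r n k \<le> max_res r n"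
  unfolding max_res_def by (rule Max_ge) auto

lemma max_res_pos:
  assumes "\<forall>n k. 1 \<le> n \<and> k < 2^n \<longrightarrow> 0 < r n k" and "1 \<le> n"
  shows "0 < max_res r n"
proof -
  have "0 < r n 0" using assms by auto
  also have "\<dots> \<le> max_res r n" by (rule max_res_ge) simp
  finally show ?thesis .
qed

lemma sum_tree_increment_square_le:
  assumes r: "\<forall>n k. 1 \<le> n \<and> k < 2^n \<longrightarrow> 0 < r n k"
  shows "(\<Sum>k<2^Suc m. (tree_increment p (Suc m) k)^2) \<le> max_res r (Suc m) * level_energy r p (Suc m)"
  unfolding level_energy_Suc H1_seminorm_terms_def sum_distrib_left
proof (rule sum_mono)
  fix k :: nat assume k: "k \<in> {..<2^Suc m}"
  define d where "d = p (Suc m) k - p m (k mod 2^m)"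
  have r_pos: "0 < r (Suc m) k" using r k by simp
  have "d^2 = r (Suc m) k * (d^2 / r (Suc m) k)" using r_pos by simp
  also have "\<dots> \<le> max_res r (Suc m) * (d^2 / r (Suc m) k)"
    using r_pos k by (intro mult_right_mono max_res_ge) auto
  finally show "(tree_increment p (Suc m) k)^2 \<le> max_res r (Suc m) * ((p (Suc m) k - p m (k mod 2^m))^2 / r (Suc m) k)"
    by (simp add: d_def tree_increment_def)
qed

definition trace_weight :: "(nat \<Rightarrow> nat \<Rightarrow> real) \<Rightarrow> real \<Rightarrow> nat \<Rightarrow> real" where
  "trace_weight r s n = (1 + 2^n) powr (2 * s) * (if n = 0 then 1 else max_res r n / 2^n)"

lemma trace_weight_pos:
  assumes "\<forall>n k. 1 \<le> n \<and> k < 2^n \<longrightarrow> 0 < r n k"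
  shows "0 < trace_weight r s n"
proof -
  have "(0::real) < 1 + 2^n" by (intro add_pos_pos) simp_all
  then have "0 < (1 + (2::real)^n) powr (2 * s)" by simp
  then show ?thesis
    unfolding trace_weight_def using max_res_pos[OF assms, of n] by auto
qed

lemma summable_trace_weight:
  assumes s: "s > 0"
    and r: "\<forall>n k. 1 \<le> n \<and> k < 2^n \<longrightarrow> 0 < r n k"
    and hs: "summable (\<lambda>n. max_res r (Suc n) / 2 powr (real (Suc n) * (1 - 2 * s)))"
  shows "summable (trace_weight r s)"
proof -
  have "trace_weight r s (Suc m) \<le> 2 powr (2 * s) * (max_res r (Suc m) / 2 powr (real (Suc m) * (1 - 2 * s)))"
    for m
  proof -
    define x where "x = real (Suc m)"
    define M where "M = max_res r (Suc m)"
    have M_pos: "0 < M" unfolding M_def using max_res_pos[OF r] by simp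
    have pow: "(2::real)^(Suc m) = 2 powr x" unfolding x_def by (rule powr_realpow[symmetric]) simp
    have "(1 + 2^(Suc m)) powr (2 * s) \<le> (2 * 2 powr x) powr (2 * s)"
      using s one_le_power[of "2::real" "Suc m"] unfolding pow[symmetric] by (intro powr_mono2) auto
    also have "\<dots> = 2 powr (2 * s) * 2 powr (x * (2 * s))"
      by (simp add: powr_mult powr_powr)
    finally have weight_le: "(1 + 2^(Suc m)) powr (2 * s) \<le> 2 powr (2 * s) * 2 powr (x * (2 * s))" .
    have "trace_weight r s (Suc m) = (1 + 2^(Suc m)) powr (2 * s) * (M / 2 powr x)"
      unfolding trace_weight_def M_def pow by simp
    also have "\<dots> \<le> 2 powr (2 * s) * 2 powr (x * (2 * s)) * (M / 2 powr x)"
      using weight_le M_pos by (intro mult_right_mono) auto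
    also have "\<dots> = 2 powr (2 * s) * (M / 2 powr (x * (1 - 2 * s)))"
      by (simp add: field_simps powr_add[symmetric])
    finally show ?thesis unfolding M_def x_def .
  qed
  then have "summable (\<lambda>m. trace_weight r s (Suc m))"
    using trace_weight_pos[OF r, of s]
    by (intro summable_comparison_test'[OF summable_mult[OF hs]]) (simp add: less_imp_le)
  then show ?thesis by (simp only: summable_Suc_iff)
qed

lemma weighted_integral_increment_square_le:
  assumes s: "0 \<le> s" and r: "\<forall>n k. 1 \<le> n \<and> k < 2^n \<longrightarrow> 0 < r n k"
  shows "(1 + 2^n) powr (2 * s) * (\<integral>x. (ptilde_increment p n x)^2 \<partial>Z2_haar)
           \<le> trace_weight r s n * level_energy r p n"
proof (cases n)
  case 0
  then show ?thesis
    by (simp add: integral_ptilde_increment_square trace_weight_def level_energy_def tree_increment_def)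
next
  case (Suc m)
  have "(\<integral>x. (ptilde_increment p n x)^2 \<partial>Z2_haar) \<le> max_res r n * level_energy r p n / 2^n"
    unfolding integral_ptilde_increment_square Suc
    using sum_tree_increment_square_le[OF r] by (rule divide_right_mono) simp
  then have "(1 + 2^n) powr (2 * s) * (\<integral>x. (ptilde_increment p n x)^2 \<partial>Z2_haar)
      \<le> (1 + 2^n) powr (2 * s) * (max_res r n * level_energy r p n / 2^n)"
    by (rule mult_left_mono) simp
  then show ?thesis by (simp add: trace_weight_def Suc)
qed

lemma integral_increment_square_le:
  assumes s: "0 \<le> s" and r: "\<forall>n k. 1 \<le> n \<and> k < 2^n \<longrightarrow> 0 < r n k"
  shows "(\<integral>x. (ptilde_increment p n x)^2 \<partial>Z2_haar) \<le> trace_weight r s n * level_energy r p n"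
proof -
  have "1 \<le> (1 + 2^n) powr (2 * s)" using s by (intro ge_one_powr_ge_zero) auto
  then have "(\<integral>x. (ptilde_increment p n x)^2 \<partial>Z2_haar)
               \<le> (1 + 2^n) powr (2 * s) * (\<integral>x. (ptilde_increment p n x)^2 \<partial>Z2_haar)"
    using mult_right_mono[of 1 "(1 + 2^n) powr (2 * s)" "\<integral>x. (ptilde_increment p n x)^2 \<partial>Z2_haar"]
    by simp
  then show ?thesis using weighted_integral_increment_square_le[OF s r] by (rule order_trans)
qed

lemma L2_lim_if_nn_integral_le:
  fixes T :: "nat \<Rightarrow> real"
  assumes g_meas [measurable]: "g \<in> borel_measurable Z2_haar"
    and T_nonneg: "\<And>N. 0 \<le> T N" and T_lim: "T \<longlonglongrightarrow> 0"
    and nn_le: "\<And>N. (\<integral>\<^sup>+x. ennreal ((ptilde p N x - g x)^2) \<partial>Z2_haar) \<le> ennreal (T N)"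
  shows "L2_lim p g"
proof -
  have sq_int: "integrable Z2_haar (\<lambda>x. (ptilde p N x - g x)^2)" for N
  proof (rule integrableI_nonneg)
    show "(\<integral>\<^sup>+x. ennreal ((ptilde p N x - g x)^2) \<partial>Z2_haar) < \<infinity>"
      using nn_le[of N] by (rule le_less_trans) simp
  qed simp_all
  have integral_le: "(\<integral>x. (ptilde p N x - g x)^2 \<partial>Z2_haar) \<le> T N" for N
  proof -
    have "ennreal (\<integral>x. (ptilde p N x - g x)^2 \<partial>Z2_haar) = (\<integral>\<^sup>+x. ennreal ((ptilde p N x - g x)^2) \<partial>Z2_haar)"
      by (rule nn_integral_eq_integral[OF sq_int, symmetric]) simp
    then have "ennreal (\<integral>x. (ptilde p N x - g x)^2 \<partial>Z2_haar) \<le> ennreal (T N)"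
      using nn_le[of N] by simp
    then show ?thesis using T_nonneg[of N] by (simp add: ennreal_le_iff)
  qed
  have "(\<lambda>N. \<integral>x. (ptilde p N x - g x)^2 \<partial>Z2_haar) \<longlonglongrightarrow> 0"
  proof (rule tendsto_sandwich[of "\<lambda>_. 0" _ _ T])
    show "\<forall>\<^sub>F N in sequentially. 0 \<le> (\<integral>x. (ptilde p N x - g x)^2 \<partial>Z2_haar)"
      by (intro always_eventually allI integral_nonneg_AE) simp
    show "\<forall>\<^sub>F N in sequentially. (\<integral>x. (ptilde p N x - g x)^2 \<partial>Z2_haar) \<le> T N"
      using integral_le by (intro always_eventually allI)
  qed (simp_all add: T_lim)
  moreover have "integrable Z2_haar (\<lambda>x. (g x)^2)"
  proof (rule Bochner_Integration.integrable_bound)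
    show "integrable Z2_haar (\<lambda>x. 2 * (ptilde p 0 x - g x)^2 + 2 * (ptilde p 0 x)^2)"
      using sq_int[of 0] integrable_cylinder[of "\<lambda>k. (p 0 k)^2" 0]
      by (intro Bochner_Integration.integrable_add integrable_mult_right) (simp_all add: ptilde_def)
    have "(a::real)^2 \<le> 2 * (b - a)^2 + 2 * b^2" for a b
      using zero_le_power2[of "2 * b - a"] by (simp add: power2_eq_square algebra_simps)
    then show "AE x in Z2_haar. norm ((g x)^2) \<le> norm (2 * (ptilde p 0 x - g x)^2 + 2 * (ptilde p 0 x)^2)"
      by simp
  qed simp
  ultimately show ?thesis unfolding L2_lim_def using g_meas by blast
qed

lemma ex_L2_lim_ptilde:
  assumes s: "0 \<le> s" and r: "\<forall>n k. 1 \<le> n \<and> k < 2^n \<longrightarrow> 0 < r n k"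
    and c: "summable (trace_weight r s)" and p: "in_H1 r p"
  shows "\<exists>g. L2_lim p g"
proof -
  have sq: "integrable Z2_haar (\<lambda>x. (ptilde_increment p n x)^2)" for n
    unfolding ptilde_increment_def by (rule integrable_cylinder)
  obtain g where g_meas: "g \<in> borel_measurable Z2_haar"
    and g_le: "\<And>N. (\<integral>\<^sup>+x. ennreal (((\<Sum>n<N. ptilde_increment p n x) - g x)^2) \<partial>Z2_haar)
                    \<le> ennreal ((\<Sum>i. trace_weight r s (i + N)) * suminf (level_energy r p))"
    by (rule L2_convergent_weighted_series[where e = "ptilde_increment p" and c = "trace_weight r s"
          and b = "level_energy r p", OF borel_measurable_ptilde_increment sq trace_weight_pos[OF r] c
          integral_increment_square_le[OF s r] summable_level_energy[OF p]])
      (rule that)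
  define T where "T N = (\<Sum>i. trace_weight r s (i + Suc N)) * suminf (level_energy r p)" for N
  have "0 \<le> T N" for N
  proof -
    have "0 \<le> (\<Sum>i. trace_weight r s (i + Suc N))"
      using trace_weight_pos[OF r] by (intro suminf_nonneg summable_ignore_initial_segment c) (simp add: less_imp_le)
    moreover have "0 \<le> suminf (level_energy r p)"
      using level_energy_nonneg[OF r] summable_level_energy[OF p] by (intro suminf_nonneg)
    ultimately show ?thesis unfolding T_def by simp
  qed
  moreover have "T \<longlonglongrightarrow> 0"
    unfolding T_def using LIMSEQ_Suc[OF suminf_tail_tendsto_0[OF c]] by (rule tendsto_mult_left_zero)
  moreover have "(\<integral>\<^sup>+x. ennreal ((ptilde p N x - g x)^2) \<partial>Z2_haar) \<le> ennreal (T N)" for N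
    using g_le[of "Suc N"] by (simp add: ptilde_eq_sum_increments T_def)
  ultimately show ?thesis using L2_lim_if_nn_integral_le[OF g_meas] by blast
qed

section \<open>The trace estimate\<close>

lemma Hs_terms_increment_le:
  assumes s: "0 \<le> s" and r: "\<forall>n k. 1 \<le> n \<and> k < 2^n \<longrightarrow> 0 < r n k"
    and F: "finite F" "F \<subseteq> Lambda2"
  shows "(\<Sum>l\<in>F. Hs_terms s (ptilde_increment p n) l) \<le> trace_weight r s n * level_energy r p n"
  using Hs_terms_cylinder_le[OF s F, of "tree_increment p n" n]
    weighted_integral_increment_square_le[OF s r, of n p]
  by (simp add: ptilde_increment_def[abs_def] integral_ptilde_increment_square[unfolded ptilde_increment_def])

lemma Hs_terms_ptilde_le:
  assumes s: "0 \<le> s" and r: "\<forall>n k. 1 \<le> n \<and> k < 2^n \<longrightarrow> 0 < r n k"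
    and c: "summable (trace_weight r s)" and p: "in_H1 r p"
    and F: "finite F" "F \<subseteq> Lambda2"
  shows "(\<Sum>l\<in>F. Hs_terms s (ptilde p N) l) \<le> suminf (trace_weight r s) * suminf (level_energy r p)"
proof -
  define c where "c = trace_weight r s"
  define K where "K = suminf c"
  define f where "f n l = Hs_terms s (ptilde_increment p n) l / c n" for n l
  have c_pos: "0 < c n" for n unfolding c_def by (rule trace_weight_pos[OF r])
  have K_nonneg: "0 \<le> K"
    unfolding K_def c_def using c c_pos by (intro suminf_nonneg) (simp_all add: c_def less_imp_le)
  have pointwise: "Hs_terms s (ptilde p N) l \<le> K * (\<Sum>n<Suc N. f n l)" for l
  proof -
    define w where "w = (1 + abs2 l) powr (2 * s)"
    have fourier_sum: "fourier2 (ptilde p N) l = (\<Sum>n<Suc N. fourier2 (ptilde_increment p n) l)"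
      unfolding ptilde_eq_sum_increments[abs_def] by (intro fourier2_sum integrable_ptilde_increment)
    have "(cmod (fourier2 (ptilde p N) l))^2
        \<le> (\<Sum>n<Suc N. c n) * (\<Sum>n<Suc N. (cmod (fourier2 (ptilde_increment p n) l))^2 / c n)"
      unfolding fourier_sum using c_pos by (rule norm_sum_squared_le_weighted)
    also have "\<dots> \<le> K * (\<Sum>n<Suc N. (cmod (fourier2 (ptilde_increment p n) l))^2 / c n)"
      using c c_pos unfolding K_def c_def
      by (intro mult_right_mono sum_le_suminf sum_nonneg) (auto simp: less_imp_le)
    finally have "w * (cmod (fourier2 (ptilde p N) l))^2
        \<le> w * (K * (\<Sum>n<Suc N. (cmod (fourier2 (ptilde_increment p n) l))^2 / c n))"
      unfolding w_def by (rule mult_left_mono) simp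
    moreover have "(\<Sum>n<Suc N. f n l) = w * (\<Sum>n<Suc N. (cmod (fourier2 (ptilde_increment p n) l))^2 / c n)"
      by (simp only: f_def Hs_terms_def w_def sum_distrib_left times_divide_eq_right)
    ultimately show ?thesis by (simp add: Hs_terms_def w_def mult.left_commute)
  qed
  have "(\<Sum>l\<in>F. Hs_terms s (ptilde p N) l) \<le> (\<Sum>l\<in>F. K * (\<Sum>n<Suc N. f n l))"
    by (rule sum_mono) (rule pointwise)
  also have "\<dots> = K * (\<Sum>n<Suc N. \<Sum>l\<in>F. f n l)"
    by (simp only: sum_distrib_left[symmetric]) (subst sum.swap, rule refl)
  also have "\<dots> \<le> K * (\<Sum>n<Suc N. level_energy r p n)"
  proof (intro mult_left_mono sum_mono K_nonneg)
    fix n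
    show "(\<Sum>l\<in>F. f n l) \<le> level_energy r p n"
      using Hs_terms_increment_le[OF s r F, of p n] c_pos[of n]
      by (simp add: f_def c_def sum_divide_distrib[symmetric] pos_divide_le_eq mult.commute)
  qed
  also have "\<dots> \<le> K * suminf (level_energy r p)"
    using level_energy_nonneg[OF r] summable_level_energy[OF p]
    by (intro mult_left_mono sum_le_suminf K_nonneg) auto
  finally show ?thesis unfolding K_def c_def .
qed

lemma fourier2_tendsto_L2_lim:
  assumes "L2_lim p g"
  shows "(\<lambda>N. fourier2 (ptilde p N) l) \<longlonglongrightarrow> fourier2 g l"
proof -
  interpret prob_space Z2_haar by (rule prob_space_Z2_haar)
  from assms have g_meas [measurable]: "g \<in> borel_measurable Z2_haar"
    and g_sq: "integrable Z2_haar (\<lambda>x. (g x)^2)"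
    and lim: "(\<lambda>N. \<integral>x. (ptilde p N x - g x)^2 \<partial>Z2_haar) \<longlonglongrightarrow> 0"
    unfolding L2_lim_def by auto
  have g_int: "integrable Z2_haar g" using g_sq by (rule square_integrable_imp_integrable[OF g_meas])
  have p_int: "integrable Z2_haar (ptilde p N)" for N
    unfolding ptilde_def[abs_def] by (rule integrable_cylinder)
  have diff_sq_int: "integrable Z2_haar (\<lambda>x. (ptilde p N x - g x)^2)" for N
  proof (rule Bochner_Integration.integrable_bound)
    show "integrable Z2_haar (\<lambda>x. 2 * (ptilde p N x)^2 + 2 * (g x)^2)"
      using g_sq integrable_cylinder[of "\<lambda>k. (p N k)^2" N]
      by (intro Bochner_Integration.integrable_add integrable_mult_right) (simp_all add: ptilde_def)
    have "((a::real) - b)^2 \<le> 2 * a^2 + 2 * b^2" for a b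
      using zero_le_power2[of "a + b"] by (simp add: power2_eq_square algebra_simps)
    then show "AE x in Z2_haar. norm ((ptilde p N x - g x)^2) \<le> norm (2 * (ptilde p N x)^2 + 2 * (g x)^2)"
      by simp
  qed measurable
  have L1_le: "(\<integral>x. \<bar>ptilde p N x - g x\<bar> \<partial>Z2_haar) \<le> sqrt (\<integral>x. (ptilde p N x - g x)^2 \<partial>Z2_haar)"
    for N
    using Bochner_Integration.integrable_diff[OF p_int g_int] diff_sq_int
    by (rule integral_abs_le_sqrt_integral_square)
  have L1_lim: "(\<lambda>N. \<integral>x. \<bar>ptilde p N x - g x\<bar> \<partial>Z2_haar) \<longlonglongrightarrow> 0"
  proof (rule tendsto_sandwich[of "\<lambda>_. 0" _ _ "\<lambda>N. sqrt (\<integral>x. (ptilde p N x - g x)^2 \<partial>Z2_haar)"])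
    show "\<forall>\<^sub>F N in sequentially. 0 \<le> (\<integral>x. \<bar>ptilde p N x - g x\<bar> \<partial>Z2_haar)"
      by (simp add: integral_nonneg_AE)
    show "\<forall>\<^sub>F N in sequentially. (\<integral>x. \<bar>ptilde p N x - g x\<bar> \<partial>Z2_haar)
                                  \<le> sqrt (\<integral>x. (ptilde p N x - g x)^2 \<partial>Z2_haar)"
      by (simp add: L1_le)
    show "(\<lambda>N. sqrt (\<integral>x. (ptilde p N x - g x)^2 \<partial>Z2_haar)) \<longlonglongrightarrow> 0"
      using tendsto_real_sqrt[OF lim] by simp
  qed simp
  have "\<forall>\<^sub>F N in sequentially. norm (fourier2 (ptilde p N) l - fourier2 g l)
                              \<le> (\<integral>x. \<bar>ptilde p N x - g x\<bar> \<partial>Z2_haar)"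
    by (simp add: norm_fourier2_diff_le[OF p_int g_int])
  then show ?thesis
    by (rule LIM_zero_cancel[OF Lim_null_comparison[OF _ L1_lim]])
qed

lemma Hs_bound_L2_lim:
  assumes s: "0 \<le> s" and r: "\<forall>n k. 1 \<le> n \<and> k < 2^n \<longrightarrow> 0 < r n k"
    and c: "summable (trace_weight r s)" and p: "in_H1 r p" and g: "L2_lim p g"
  shows "in_Hs s g \<and> Hs_norm s g \<le> sqrt (suminf (trace_weight r s)) * H1_norm r p"
proof -
  define B where "B = suminf (trace_weight r s) * suminf (level_energy r p)"
  have finite_sums_le: "(\<Sum>l\<in>F. Hs_terms s g l) \<le> B" if "finite F" "F \<subseteq> Lambda2" for F
  proof -
    have "(\<lambda>N. \<Sum>l\<in>F. Hs_terms s (ptilde p N) l) \<longlonglongrightarrow> (\<Sum>l\<in>F. Hs_terms s g l)"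
      unfolding Hs_terms_def by (intro tendsto_intros fourier2_tendsto_L2_lim[OF g])
    then show ?thesis
      unfolding B_def by (rule LIMSEQ_le_const2) (use Hs_terms_ptilde_le[OF s r c p that] in auto)
  qed
  have summable: "Hs_terms s g summable_on Lambda2"
  proof (rule nonneg_bdd_above_summable_on)
    show "bdd_above (sum (Hs_terms s g) ` {F. F \<subseteq> Lambda2 \<and> finite F})"
      using finite_sums_le by (intro bdd_aboveI[of _ B]) auto
  qed (simp add: Hs_terms_def)
  have "Hs_norm s g \<le> sqrt B"
    unfolding Hs_norm_def using infsum_le_finite_sums[OF summable finite_sums_le]
    by (rule real_sqrt_le_mono)
  also have "\<dots> = sqrt (suminf (trace_weight r s)) * H1_norm r p"
    unfolding B_def H1_norm_eq_sqrt_suminf_level_energy[OF p] by (rule real_sqrt_mult)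
  finally show ?thesis using summable unfolding in_Hs_def by blast
qed

theorem proposition3p1:
  fixes r :: "nat \<Rightarrow> nat \<Rightarrow> real" and s :: real
  assumes "s > 0"
    and "\<forall>n k. 1 \<le> n \<and> k < 2^n \<longrightarrow> 0 < r n k"
    and "summable (\<lambda>n. max_res r (Suc n) / 2 powr (real (Suc n) * (1 - 2 * s)))"
  shows "\<exists>C. \<forall>p. in_H1 r p \<longrightarrow>
           (\<exists>g. L2_lim p g) \<and>
           (\<forall>g. L2_lim p g \<longrightarrow> in_Hs s g \<and> Hs_norm s g \<le> C * H1_norm r p)"
proof -
  have s: "0 \<le> s" using assms(1) by simp
  have c: "summable (trace_weight r s)" by (rule summable_trace_weight[OF assms])
  show ?thesis
    using ex_L2_lim_ptilde[OF s assms(2) c] Hs_bound_L2_lim[OF s assms(2) c] by blast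
qed

end
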